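(* Let $Y$ be a random vector in $\mathbb{R}^d$ and let $Z=Y-\mathbb{E}[Y]$ satisfy: $\|Z\|$ is sub-gaussian with modulus $R>0$, i.e. $\Pr[\|Z\|\ge t]\le 2\exp\!\big(-\tfrac{t^2}{2R^2}\big)$ for all $t\ge 0$, and $\sigma^2:=\mathbb{E}\|Z\|^2\in(0,\infty)$. Let $K_{\mathrm{snr}}=\sigma/R$. Let $Y_1,\dots,Y_b$ be i.i.d. copies of $Y$ and define \[ \hat Y=\frac1b\sum_{i=1}^b Y_i,\qquad \hat\sigma^2=\frac1b\sum_{i=1}^b\|Y_i-\hat Y\|^2 . \] Then there is an absolute constant $c>0$ such that for every $\delta\in(0,1)$, with probability at least $1-\delta$, \[ \left|\frac{\hat\sigma^2}{\sigma^2}-1\right|\le c\cdot K_{\mathrm{snr}}^{-2}\cdot\left(\sqrt{\frac{\log\frac{2b}{\delta}}{b}}+\frac{\log\frac{2\max(b,d)}{\delta}}{b}\right). \]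
   Context: All norms are Euclidean. $K_{\mathrm{snr}}=\sigma/R$ is called the signal-to-noise ratio. *)

theory Defs
  imports "HOL-Probability.Probability"
begin

text \<open>Vectors in R^d are represented as functions nat => real, only the
coordinates 0..d-1 being relevant (the points of the product sigma-algebra
PiM {..<d} (%_. borel) are the extensional such functions).\<close>

definition vspace :: "nat \<Rightarrow> (nat \<Rightarrow> real) measure" where
  "vspace d = PiM {..<d} (\<lambda>_. borel)"

definition vnorm :: "nat \<Rightarrow> (nat \<Rightarrow> real) \<Rightarrow> real" where
  "vnorm d x = sqrt (\<Sum>j<d. (x j)\<^sup>2)"

definition mean_vec :: "nat \<Rightarrow> (nat \<Rightarrow> real) measure \<Rightarrow> (nat \<Rightarrow> real)" where
  "mean_vec d P = (\<lambda>j. if j < d then (\<integral>x. x j \<partial>P) else 0)"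

definition centered :: "nat \<Rightarrow> (nat \<Rightarrow> real) measure \<Rightarrow> (nat \<Rightarrow> real) \<Rightarrow> (nat \<Rightarrow> real)" where
  "centered d P x = (\<lambda>j. x j - mean_vec d P j)"

definition sigma_sq :: "nat \<Rightarrow> (nat \<Rightarrow> real) measure \<Rightarrow> real" where
  "sigma_sq d P = (\<integral>x. (vnorm d (centered d P x))\<^sup>2 \<partial>P)"

definition sample_mean :: "nat \<Rightarrow> nat \<Rightarrow> (nat \<Rightarrow> nat \<Rightarrow> real) \<Rightarrow> (nat \<Rightarrow> real)" where
  "sample_mean d b ys = (\<lambda>j. (1 / real b) * (\<Sum>i<b. ys i j))"

definition sample_var :: "nat \<Rightarrow> nat \<Rightarrow> (nat \<Rightarrow> nat \<Rightarrow> real) \<Rightarrow> real" where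
  "sample_var d b ys = (1 / real b) * (\<Sum>i<b. (vnorm d (\<lambda>j. ys i j - sample_mean d b ys j))\<^sup>2)"

end

theory Submission
  imports Defs
begin

text \<open>
  The sample variance is (b - 1)/b times the U-statistic U with kernel h(y, y') = |y - y'|^2/2,
  whose mean on independent copies is sigma^2. Following Hoeffding, U is the average over all
  permutations pi of the statistics V_pi averaging h over the b div 2 disjoint pairs
  (pi j, pi (j + b div 2)); by convexity of exp, E exp (l (U - sigma^2)) is at most
  E exp (l (V_id - sigma^2)), which factorises over the independent pairs. The sub-gaussian tail
  of |Z| gives E exp (|Z|^2 / (4 R^2)) <= 1 + 2 e, and a second order Taylor bound turns this
  into E exp (mu (h - sigma^2)) <= exp (pair_mgf_const R^4 mu^2) for |mu| <= 1 / (8 R^2).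
  A Chernoff bound with a Bernstein-type choice of l controls |U - sigma^2| outside an event of
  probability delta / b, and the bias term 1/b is absorbed because sigma^2 <= 4 (1 + 2 e) R^2
  and log (2 max b d / delta) >= log 2.
\<close>

section \<open>The sample variance as a U-statistic\<close>

lemma sum_sq_dev_mean_eq_pairs:
  fixes a :: "nat \<Rightarrow> real"
  shows "(\<Sum>i<b. (a i - (\<Sum>k<b. a k) / b)\<^sup>2) = (\<Sum>i<b. \<Sum>k<b. (a i - a k)\<^sup>2) / (2 * real b)"
proof (cases "b = 0")
  case False
  define S where "S = (\<Sum>k<b. a k)"
  define Q where "Q = (\<Sum>k<b. (a k)\<^sup>2)"
  have "(\<Sum>i<b. (a i - S / b)\<^sup>2) = (\<Sum>i<b. (a i)\<^sup>2 - 2 * (S / b) * a i + (S / b)\<^sup>2)"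
    by (intro sum.cong refl) (simp add: power2_diff)
  also have "\<dots> = Q - 2 * (S / b) * S + b * (S / b)\<^sup>2"
    by (simp add: sum.distrib sum_subtractf Q_def S_def flip: sum_distrib_left sum_divide_distrib)
  also have "\<dots> = Q - S\<^sup>2 / b"
    using False by (simp add: power2_eq_square field_simps)
  finally have dev: "(\<Sum>i<b. (a i - S / b)\<^sup>2) = Q - S\<^sup>2 / b" .
  have "(\<Sum>i<b. \<Sum>k<b. (a i - a k)\<^sup>2) = (\<Sum>i<b. \<Sum>k<b. (a i)\<^sup>2 + (a k)\<^sup>2 - 2 * (a i * a k))"
    by (simp add: power2_diff mult.assoc)
  also have "\<dots> = 2 * b * Q - 2 * S\<^sup>2"
    by (simp add: sum.distrib sum_subtractf Q_def S_def power2_eq_square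
        flip: sum_distrib_left sum_distrib_right)
  finally have pairs: "(\<Sum>i<b. \<Sum>k<b. (a i - a k)\<^sup>2) = 2 * b * Q - 2 * S\<^sup>2" .
  show ?thesis
    unfolding S_def[symmetric] dev pairs using False by (simp add: field_simps power2_eq_square)
qed simp

definition half_sq_dist :: "nat \<Rightarrow> (nat \<Rightarrow> real) \<Rightarrow> (nat \<Rightarrow> real) \<Rightarrow> real" where
  "half_sq_dist d y y' = (\<Sum>j<d. (y j - y' j)\<^sup>2) / 2"

lemma half_sq_dist_self [simp]: "half_sq_dist d y y = 0"
  by (simp add: half_sq_dist_def)

definition ustat :: "nat \<Rightarrow> nat \<Rightarrow> (nat \<Rightarrow> nat \<Rightarrow> real) \<Rightarrow> real" where
  "ustat d b ys = (\<Sum>i<b. \<Sum>k<b. half_sq_dist d (ys i) (ys k)) / (real b * (real b - 1))"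

lemma sample_var_eq_pairs:
  "sample_var d b ys = (\<Sum>i<b. \<Sum>k<b. half_sq_dist d (ys i) (ys k)) / (real b)\<^sup>2"
proof -
  have "sample_var d b ys = (\<Sum>j<d. \<Sum>i<b. (ys i j - (\<Sum>k<b. ys k j) / b)\<^sup>2) / b"
    by (simp add: sample_var_def sample_mean_def vnorm_def sum_nonneg sum_divide_distrib
        flip: sum.swap[of _ "{..<d}"])
  also have "\<dots> = (\<Sum>j<d. \<Sum>i<b. \<Sum>k<b. (ys i j - ys k j)\<^sup>2) / (2 * (real b)\<^sup>2)"
    unfolding sum_sq_dev_mean_eq_pairs by (simp add: power2_eq_square flip: sum_divide_distrib)
  also have "\<dots> = (\<Sum>i<b. \<Sum>k<b. half_sq_dist d (ys i) (ys k)) / (real b)\<^sup>2"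
    by (simp add: half_sq_dist_def sum.swap[of _ "{..<d}"] flip: sum_divide_distrib)
  finally show ?thesis .
qed

(* Holds for every b: for b \<le> 1 both sides vanish, using x / 0 = 0. *)
lemma sample_var_eq_ustat: "sample_var d b ys = (real b - 1) / real b * ustat d b ys"
proof (cases "b = 1")
  case True
  then show ?thesis by (simp add: sample_var_eq_pairs)
next
  case False
  then show ?thesis
    by (cases "b = 0") (simp_all add: sample_var_eq_pairs ustat_def power2_eq_square)
qed

lemma sum_permutations_pair_eq:
  fixes f :: "nat \<Rightarrow> nat \<Rightarrow> 'a::comm_monoid_add"
  assumes "a < b" "c < b" "a \<noteq> c"
  shows "(\<Sum>\<pi> | \<pi> permutes {..<b}. f (\<pi> a) (\<pi> c)) = (\<Sum>\<pi> | \<pi> permutes {..<b}. f (\<pi> 0) (\<pi> 1))"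
proof -
  define c' where "c' = Transposition.transpose 0 a c"
  define \<sigma> where "\<sigma> = Transposition.transpose 0 a \<circ> Transposition.transpose 1 c'"
  have "c' < b" "c' \<noteq> 0"
    using assms by (auto simp: c'_def Transposition.transpose_def)
  then have \<sigma>: "\<sigma> permutes {..<b}" "\<sigma> 0 = a" "\<sigma> 1 = c" "\<sigma> (Suc 0) = c"
    using assms unfolding \<sigma>_def
    by ((intro permutes_compose permutes_swap_id; simp)
        | simp add: c'_def Transposition.transpose_def)+
  show ?thesis
    using sum_permutations_compose_right[OF \<sigma>(1), of "\<lambda>\<pi>. f (\<pi> 0) (\<pi> 1)"] by (simp add: \<sigma>)
qed

lemma sum_permutations_double_sum:
  fixes f :: "nat \<Rightarrow> nat \<Rightarrow> real"
  assumes "\<And>i. f i i = 0"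
  shows "(\<Sum>\<pi> | \<pi> permutes {..<b}. \<Sum>i<b. \<Sum>k<b. f (\<pi> i) (\<pi> k))
       = real b * (real b - 1) * (\<Sum>\<pi> | \<pi> permutes {..<b}. f (\<pi> 0) (\<pi> 1))"
proof -
  define Perms where "Perms = {\<pi>. \<pi> permutes {..<b}}"
  define S0 where "S0 = (\<Sum>\<pi>\<in>Perms. f (\<pi> 0) (\<pi> 1))"
  have "(\<Sum>\<pi>\<in>Perms. \<Sum>i<b. \<Sum>k<b. f (\<pi> i) (\<pi> k)) = (\<Sum>i<b. \<Sum>k<b. \<Sum>\<pi>\<in>Perms. f (\<pi> i) (\<pi> k))"
    by (subst sum.swap) (simp only: sum.swap[of _ Perms "{..<b}"])
  also have "\<dots> = (\<Sum>i<b. \<Sum>k<b. S0 - (if i = k then S0 else 0))"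
  proof (intro sum.cong refl)
    fix i k assume "i \<in> {..<b}" "k \<in> {..<b}"
    then show "(\<Sum>\<pi>\<in>Perms. f (\<pi> i) (\<pi> k)) = (S0 - (if i = k then S0 else 0))"
      using sum_permutations_pair_eq[of i b k f] by (simp add: Perms_def S0_def assms)
  qed
  also have "\<dots> = real b * (real b - 1) * S0"
    by (simp add: sum_subtractf algebra_simps)
  finally show ?thesis
    unfolding Perms_def S0_def .
qed

lemma sum_permute_double_sum:
  assumes "\<pi> permutes S"
  shows "(\<Sum>i\<in>S. \<Sum>k\<in>S. f (\<pi> i) (\<pi> k)) = (\<Sum>i\<in>S. \<Sum>k\<in>S. f i k)"
proof -
  have "(\<Sum>i\<in>S. \<Sum>k\<in>S. f i k) = (\<Sum>i\<in>S. \<Sum>k\<in>S. f (\<pi> i) k)"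
    using sum.permute[OF assms, of "\<lambda>i. \<Sum>k\<in>S. f i k"] by (simp add: o_def)
  also have "\<dots> = (\<Sum>i\<in>S. \<Sum>k\<in>S. f (\<pi> i) (\<pi> k))"
    by (simp add: o_def sum.permute[OF assms, of "f (\<pi> _)"])
  finally show ?thesis
    by (rule sym)
qed

lemma mean_permutations_disjoint_pairs:
  fixes f :: "nat \<Rightarrow> nat \<Rightarrow> real" and m b :: nat
  assumes "0 < m" "2 * m \<le> b" "\<And>i. f i i = 0"
  shows "(\<Sum>\<pi> | \<pi> permutes {..<b}. (\<Sum>j<m. f (\<pi> j) (\<pi> (j + m))) / m) / fact b
       = (\<Sum>i<b. \<Sum>k<b. f i k) / (real b * (real b - 1))"
proof -
  define S0 where "S0 = (\<Sum>\<pi> | \<pi> permutes {..<b}. f (\<pi> 0) (\<pi> 1))"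
  have "(\<Sum>\<pi> | \<pi> permutes {..<b}. (\<Sum>j<m. f (\<pi> j) (\<pi> (j + m))) / m)
      = (\<Sum>j<m. \<Sum>\<pi> | \<pi> permutes {..<b}. f (\<pi> j) (\<pi> (j + m))) / m"
    by (simp add: sum_divide_distrib sum.swap[of _ _ "{..<m}"])
  also have "\<dots> = (\<Sum>j<m. S0) / m"
  proof (intro arg_cong2[where f="(/)"] sum.cong refl)
    fix j assume "j \<in> {..<m}"
    then show "(\<Sum>\<pi> | \<pi> permutes {..<b}. f (\<pi> j) (\<pi> (j + m))) = S0"
      using assms sum_permutations_pair_eq[of j b "j + m" f] by (simp add: S0_def)
  qed
  also have "\<dots> = S0"
    using assms(1) by simp
  finally have pairs: "(\<Sum>\<pi> | \<pi> permutes {..<b}. (\<Sum>j<m. f (\<pi> j) (\<pi> (j + m))) / m) = S0" .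
  have "fact b * (\<Sum>i<b. \<Sum>k<b. f i k) = (\<Sum>\<pi> | \<pi> permutes {..<b}. \<Sum>i<b. \<Sum>k<b. f (\<pi> i) (\<pi> k))"
    by (simp add: sum_permute_double_sum card_permutations[of "{..<b}" b])
  also have "\<dots> = real b * (real b - 1) * S0"
    unfolding S0_def by (rule sum_permutations_double_sum) (rule assms)
  finally show ?thesis
    using assms by (simp add: pairs field_simps)
qed

definition pair_stat :: "nat \<Rightarrow> nat \<Rightarrow> (nat \<Rightarrow> nat) \<Rightarrow> (nat \<Rightarrow> nat \<Rightarrow> real) \<Rightarrow> real" where
  "pair_stat d b \<pi> ys = (\<Sum>j<b div 2. half_sq_dist d (ys (\<pi> j)) (ys (\<pi> (j + b div 2)))) / (b div 2)"

lemma ustat_eq_mean_pair_stat: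
  assumes "2 \<le> b"
  shows "ustat d b ys = (\<Sum>\<pi> | \<pi> permutes {..<b}. pair_stat d b \<pi> ys) / fact b"
  using mean_permutations_disjoint_pairs[of "b div 2" b "\<lambda>i k. half_sq_dist d (ys i) (ys k)"] assms
  by (simp add: ustat_def pair_stat_def)

lemma half_sq_diff_le:
  fixes a b :: real
  shows "(a - b)\<^sup>2 / 2 \<le> a\<^sup>2 + b\<^sup>2"
proof -
  have "0 \<le> (a + b)\<^sup>2"
    by simp
  then show ?thesis
    by (simp add: power2_diff power2_sum)
qed

lemma exp_mean_le_mean_exp:
  fixes x :: "'a \<Rightarrow> real"
  assumes "finite S" "S \<noteq> {}"
  shows "exp ((\<Sum>s\<in>S. x s) / card S) \<le> (\<Sum>s\<in>S. exp (x s)) / card S"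
  using convex_on_sum[OF assms exp_convex, of "\<lambda>_. 1 / card S" x] assms
  by (simp add: sum_divide_distrib)

lemma sq_le_two_exp:
  fixes y :: real
  assumes "0 \<le> y"
  shows "y\<^sup>2 \<le> 2 * exp y"
proof -
  obtain t where "exp y = (\<Sum>m<3. y ^ m / fact m) + exp t / fact 3 * y ^ 3"
    using Maclaurin_exp_le[of y 3] by blast
  moreover have "(\<Sum>m<3. y ^ m / fact m) = 1 + y + y\<^sup>2 / 2"
    by (simp add: numeral_3_eq_3 power2_eq_square)
  ultimately show ?thesis
    using assms by simp
qed

lemma exp_le_linear_plus_quadratic:
  fixes \<mu> a X :: real
  assumes "0 < a" "\<bar>\<mu>\<bar> \<le> a / 2"
  shows "exp (\<mu> * X) \<le> 1 + \<mu> * X + 4 * \<mu>\<^sup>2 / a\<^sup>2 * exp (a * \<bar>X\<bar>)"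
proof -
  obtain t where t: "\<bar>t\<bar> \<le> \<bar>\<mu> * X\<bar>"
    and taylor: "exp (\<mu> * X) = (\<Sum>m<2. (\<mu> * X) ^ m / fact m) + exp t / fact 2 * (\<mu> * X) ^ 2"
    using Maclaurin_exp_le[of "\<mu> * X" 2] by blast
  define y where "y = a * \<bar>X\<bar> / 2"
  have "0 \<le> y"
    using assms by (simp add: y_def)
  have "\<bar>\<mu> * X\<bar> \<le> y"
    using assms mult_right_mono[OF assms(2) abs_ge_zero[of X]] by (simp add: y_def abs_mult)
  then have "exp t \<le> exp y"
    using t by simp
  then have "exp t / 2 * (\<mu> * X)\<^sup>2 \<le> exp y / 2 * (\<mu> * X)\<^sup>2"
    by (simp add: mult_right_mono)
  also have "\<dots> = 2 * \<mu>\<^sup>2 / a\<^sup>2 * (exp y * y\<^sup>2)"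
    using assms by (simp add: y_def field_simps)
  also have "\<dots> \<le> 2 * \<mu>\<^sup>2 / a\<^sup>2 * (exp y * (2 * exp y))"
    using sq_le_two_exp[OF \<open>0 \<le> y\<close>] by (intro mult_left_mono) auto
  also have "\<dots> = 4 * \<mu>\<^sup>2 / a\<^sup>2 * exp (a * \<bar>X\<bar>)"
    by (simp add: y_def flip: exp_add)
  finally show ?thesis
    using taylor by (simp add: numeral_2_eq_2)
qed

section \<open>Moment generating functions and product measures\<close>

lemma exp_le_one_plus_layers:
  fixes w c :: real
  assumes "0 \<le> w" "0 < c"
  shows "ennreal (exp (w / c))
    \<le> 1 + (\<Sum>k. ennreal (exp (real k + 1) - exp (real k)) * indicator {x. c * real k \<le> x} w)"
proof -
  define n where "n = nat \<lfloor>w / c\<rfloor>"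
  have "w / c < real n + 1"
    using assms by (simp add: n_def)
  have layer: "c * real k \<le> w \<longleftrightarrow> k < Suc n" for k
  proof -
    have "c * real k \<le> w \<longleftrightarrow> real k \<le> w / c"
      using assms(2) by (simp add: pos_le_divide_eq mult.commute)
    also have "\<dots> \<longleftrightarrow> k \<le> n"
      using assms by (simp add: n_def le_floor_iff le_nat_iff)
    finally show ?thesis
      by (simp add: less_Suc_eq_le)
  qed
  have "(\<Sum>k. ennreal (exp (real k + 1) - exp (real k)) * indicator {x. c * real k \<le> x} w)
      = (\<Sum>k<Suc n. ennreal (exp (real (Suc k)) - exp (real k)))"
    by (subst suminf_finite[of "{..<Suc n}"]) (auto simp: layer add.commute)
  also have "\<dots> = ennreal (\<Sum>k<Suc n. exp (real (Suc k)) - exp (real k))"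
    by (rule sum_ennreal) simp
  also have "(\<Sum>k<Suc n. exp (real (Suc k)) - exp (real k)) = exp (real (Suc n)) - 1"
    using sum_lessThan_telescope[of "\<lambda>k. exp (real k)" "Suc n"] by simp
  finally have layers: "(\<Sum>k. ennreal (exp (real k + 1) - exp (real k)) * indicator {x. c * real k \<le> x} w)
      = ennreal (exp (real (Suc n)) - 1)" .
  have "exp (w / c) \<le> 1 + (exp (real (Suc n)) - 1)"
    using \<open>w / c < real n + 1\<close> by simp
  then have "ennreal (exp (w / c)) \<le> ennreal (1 + (exp (real (Suc n)) - 1))"
    by (rule ennreal_leI)
  also have "\<dots> = 1 + ennreal (exp (real (Suc n)) - 1)"
    by (subst ennreal_plus) auto
  finally show ?thesis
    unfolding layers .
qed

lemma suminf_layer_weights: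
  "(\<Sum>k. ennreal ((exp (real k + 1) - exp (real k)) * (2 * exp (- 2 * real k)))) = ennreal (2 * exp 1)"
proof -
  have termwise: "(exp (real k + 1) - exp (real k)) * (2 * exp (- 2 * real k)) = 2 * (exp 1 - 1) * exp (- 1) ^ k"
    for k :: nat
    by (simp add: algebra_simps exp_add[symmetric] exp_of_nat_mult[symmetric] exp_diff[symmetric])
  have "(\<lambda>k. 2 * (exp 1 - 1) * exp (- 1) ^ k) sums (2 * (exp 1 - 1) * (1 / (1 - exp (- 1 :: real))))"
    by (intro sums_mult geometric_sums) simp
  moreover have "2 * (exp 1 - 1) * (1 / (1 - exp (- 1 :: real))) = 2 * exp 1"
    by (simp add: exp_minus field_simps)
  ultimately show ?thesis
    unfolding termwise by (intro suminf_ennreal_eq) auto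
qed

lemma (in prob_space) nn_integral_exp_le_of_tail:
  fixes X :: "'a \<Rightarrow> real" and c :: real
  assumes [measurable]: "X \<in> borel_measurable M"
    and nonneg: "\<And>x. x \<in> space M \<Longrightarrow> 0 \<le> X x" and "0 < c"
    and tail: "\<And>k::nat. prob {x \<in> space M. c * k \<le> X x} \<le> 2 * exp (- 2 * k)"
  shows "(\<integral>\<^sup>+x. exp (X x / c) \<partial>M) \<le> ennreal (1 + 2 * exp 1)"
proof -
  define A where "A k = {x \<in> space M. c * real k \<le> X x}" for k :: nat
  have [measurable]: "A k \<in> sets M" for k
    unfolding A_def by measurable
  have "(\<integral>\<^sup>+x. exp (X x / c) \<partial>M)
     \<le> (\<integral>\<^sup>+x. 1 + (\<Sum>k. ennreal (exp (real k + 1) - exp (real k)) * indicator (A k) x) \<partial>M)"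
    using exp_le_one_plus_layers[OF nonneg \<open>0 < c\<close>]
    by (intro nn_integral_mono) (simp add: A_def indicator_def)
  also have "\<dots> = 1 + (\<Sum>k. ennreal (exp (real k + 1) - exp (real k)) * emeasure M (A k))"
    by (simp add: nn_integral_add nn_integral_suminf nn_integral_cmult_indicator emeasure_space_1)
  also have "\<dots> \<le> 1 + (\<Sum>k. ennreal ((exp (real k + 1) - exp (real k)) * (2 * exp (- 2 * real k))))"
  proof (intro add_left_mono suminf_le allI)
    fix k
    have "emeasure M (A k) \<le> ennreal (2 * exp (- 2 * real k))"
      using tail[of k] by (simp add: A_def emeasure_eq_measure ennreal_leI)
    then show "ennreal (exp (real k + 1) - exp (real k)) * emeasure M (A k)
      \<le> ennreal ((exp (real k + 1) - exp (real k)) * (2 * exp (- 2 * real k)))"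
      by (subst ennreal_mult) (auto intro: mult_left_mono)
  qed auto
  also have "\<dots> = ennreal (1 + 2 * exp 1)"
    unfolding suminf_layer_weights by (subst ennreal_plus) auto
  finally show ?thesis .
qed

lemma (in prob_space) nn_integral_PiM_prod_subset:
  fixes f :: "'a \<Rightarrow> ennreal"
  assumes "finite I" "K \<subseteq> I" "f \<in> borel_measurable M"
  shows "(\<integral>\<^sup>+ys. (\<Prod>k\<in>K. f (ys k)) \<partial>PiM I (\<lambda>_. M)) = (\<integral>\<^sup>+y. f y \<partial>M) ^ card K"
proof -
  interpret product_sigma_finite "\<lambda>_. M"
    by (simp add: product_sigma_finite_def prob_space_imp_sigma_finite prob_space_axioms)
  have "(\<Prod>k\<in>K. f (ys k)) = (\<Prod>k\<in>I. (\<lambda>y. if k \<in> K then f y else 1) (ys k))" for ys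
    using assms(1,2) by (simp add: prod.If_cases Int_absorb1)
  then have "(\<integral>\<^sup>+ys. (\<Prod>k\<in>K. f (ys k)) \<partial>PiM I (\<lambda>_. M))
      = (\<integral>\<^sup>+ys. (\<Prod>k\<in>I. (\<lambda>y. if k \<in> K then f y else 1) (ys k)) \<partial>PiM I (\<lambda>_. M))"
    by simp
  also have "\<dots> = (\<Prod>k\<in>I. \<integral>\<^sup>+y. (if k \<in> K then f y else 1) \<partial>M)"
    using assms by (intro product_nn_integral_prod) auto
  also have "\<dots> = (\<Prod>k\<in>I. if k \<in> K then \<integral>\<^sup>+y. f y \<partial>M else 1)"
    by (rule prod.cong) (simp_all add: emeasure_space_1)
  also have "\<dots> = (\<integral>\<^sup>+y. f y \<partial>M) ^ card K"
    using assms(1,2) by (simp add: prod.If_cases Int_absorb1)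
  finally show ?thesis .
qed

lemma (in prob_space) nn_integral_PiM_disjoint_pairs:
  fixes g :: "'a \<Rightarrow> 'a \<Rightarrow> ennreal"
  assumes "2 * m \<le> b"
    and g: "\<And>y'. (\<lambda>y. g y y') \<in> borel_measurable M"
    and G: "(\<lambda>y'. \<integral>\<^sup>+y. g y y' \<partial>M) \<in> borel_measurable M"
    and "(\<lambda>ys. \<Prod>j<m. g (ys j) (ys (j + m))) \<in> borel_measurable (PiM {..<b} (\<lambda>_. M))"
  shows "(\<integral>\<^sup>+ys. (\<Prod>j<m. g (ys j) (ys (j + m))) \<partial>PiM {..<b} (\<lambda>_. M))
       = (\<integral>\<^sup>+y'. \<integral>\<^sup>+y. g y y' \<partial>M \<partial>M) ^ m"
proof -
  interpret product_sigma_finite "\<lambda>_. M"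
    by (simp add: product_sigma_finite_def prob_space_imp_sigma_finite prob_space_axioms)
  have split: "{..<b} = {m..<b} \<union> {..<m}" and disjoint: "{m..<b} \<inter> {..<m} = {}"
    using assms(1) by auto
  have "(\<integral>\<^sup>+ys. (\<Prod>j<m. g (ys j) (ys (j + m))) \<partial>PiM {..<b} (\<lambda>_. M))
      = (\<integral>\<^sup>+x. \<integral>\<^sup>+y. (\<Prod>j<m. g (merge {m..<b} {..<m} (x, y) j) (merge {m..<b} {..<m} (x, y) (j + m)))
          \<partial>PiM {..<m} (\<lambda>_. M) \<partial>PiM {m..<b} (\<lambda>_. M))"
    using product_nn_integral_fold[OF disjoint, of "\<lambda>ys. \<Prod>j<m. g (ys j) (ys (j + m))"] assms
    unfolding split by simp
  also have "\<dots> = (\<integral>\<^sup>+x. \<integral>\<^sup>+y. (\<Prod>j<m. g (y j) (x (j + m))) \<partial>PiM {..<m} (\<lambda>_. M) \<partial>PiM {m..<b} (\<lambda>_. M))"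
    using assms(1) by (intro nn_integral_cong prod.cong) (auto simp: merge_def)
  also have "\<dots> = (\<integral>\<^sup>+x. (\<Prod>j<m. \<integral>\<^sup>+y. g y (x (j + m)) \<partial>M) \<partial>PiM {m..<b} (\<lambda>_. M))"
    using g by (intro nn_integral_cong product_nn_integral_prod) auto
  also have "\<dots> = (\<integral>\<^sup>+x. (\<Prod>k\<in>{m..<2 * m}. \<integral>\<^sup>+y. g y (x k) \<partial>M) \<partial>PiM {m..<b} (\<lambda>_. M))"
    using prod.shift_bounds_nat_ivl[of "\<lambda>k. \<integral>\<^sup>+y. g y (_ k) \<partial>M" 0 m m]
    by (simp add: atLeast0LessThan mult_2)
  also have "\<dots> = (\<integral>\<^sup>+y'. \<integral>\<^sup>+y. g y y' \<partial>M \<partial>M) ^ m"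
    using assms(1) G by (subst nn_integral_PiM_prod_subset) auto
  finally show ?thesis .
qed

lemma (in prob_space) nn_integral_PiM_permute:
  assumes "\<pi> permutes I" "F \<in> borel_measurable (PiM I (\<lambda>_. M))"
  shows "(\<integral>\<^sup>+ys. F (\<lambda>i\<in>I. ys (\<pi> i)) \<partial>PiM I (\<lambda>_. M)) = (\<integral>\<^sup>+ys. F ys \<partial>PiM I (\<lambda>_. M))"
proof -
  have reindex: "(\<lambda>ys. \<lambda>i\<in>I. ys (\<pi> i)) \<in> measurable (PiM I (\<lambda>_. M)) (PiM I (\<lambda>_. M))"
    using permutes_in_image[OF assms(1)] by (intro measurable_restrict measurable_component_singleton) auto
  have "distr (PiM I (\<lambda>_. M)) (PiM I (\<lambda>_. M)) (\<lambda>ys. \<lambda>i\<in>I. ys (\<pi> i)) = PiM I (\<lambda>_. M)"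
    using distr_PiM_reindex[of I "\<lambda>_. M" \<pi> I] assms(1) prob_space_axioms
    by (auto simp: permutes_inj_on permutes_in_image)
  then show ?thesis
    using nn_integral_distr[OF reindex, of F] assms(2) by simp
qed

lemma nn_integral_mean_le:
  fixes f :: "'i \<Rightarrow> 'a \<Rightarrow> real" and B :: ennreal
  assumes "finite S" "S \<noteq> {}"
    and "\<And>s. s \<in> S \<Longrightarrow> f s \<in> borel_measurable M" "\<And>s x. 0 \<le> f s x"
    and "\<And>s. s \<in> S \<Longrightarrow> (\<integral>\<^sup>+x. f s x \<partial>M) \<le> B"
  shows "(\<integral>\<^sup>+x. ennreal ((\<Sum>s\<in>S. f s x) / card S) \<partial>M) \<le> B"
proof -
  have pointwise: "ennreal ((\<Sum>s\<in>S. f s x) / card S) = (\<Sum>s\<in>S. ennreal (1 / card S) * ennreal (f s x))"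
    for x
  proof -
    have "ennreal ((\<Sum>s\<in>S. f s x) / card S) = (\<Sum>s\<in>S. ennreal (f s x / card S))"
      using assms(4) by (simp add: sum_divide_distrib sum_nonneg flip: sum_ennreal)
    also have "\<dots> = (\<Sum>s\<in>S. ennreal (1 / card S) * ennreal (f s x))"
      using assms(4) by (intro sum.cong refl) (simp flip: ennreal_mult)
    finally show ?thesis .
  qed
  have "(\<integral>\<^sup>+x. ennreal ((\<Sum>s\<in>S. f s x) / card S) \<partial>M)
      = (\<Sum>s\<in>S. ennreal (1 / card S) * (\<integral>\<^sup>+x. f s x \<partial>M))"
    using assms(3) by (simp add: pointwise nn_integral_sum nn_integral_cmult)
  also have "\<dots> \<le> (\<Sum>s\<in>S. ennreal (1 / card S) * B)"
    using assms(5) by (intro sum_mono mult_left_mono) auto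
  also have "\<dots> = (ennreal (card S) * ennreal (1 / card S)) * B"
    by (simp add: ennreal_of_nat_eq_real_of_nat mult.assoc)
  also have "\<dots> = B"
    using assms(1,2) by (simp flip: ennreal_mult)
  finally show ?thesis .
qed

lemma emeasure_ge_le_exp_nn_integral:
  assumes "0 < s" "f \<in> borel_measurable M"
  shows "emeasure M {x \<in> space M. a \<le> f x} \<le> ennreal (exp (- s * a)) * (\<integral>\<^sup>+x. exp (s * f x) \<partial>M)"
proof -
  have "(\<integral>\<^sup>+x. ennreal (exp (s * f x)) * indicator (space M) x \<partial>M) = (\<integral>\<^sup>+x. exp (s * f x) \<partial>M)"
    by (intro nn_integral_cong) simp
  then show ?thesis
    using Chernoff_ineq_nn_integral_ge[of s "space M" M f a] assms by simp
qed

(* 64 R^4 mu^2 is the quadratic coefficient of exp_le_linear_plus_quadratic at a = 1 / (4 R^2),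
   and exp (1 + 2 e) (1 + 2 e)^2 bounds exp (sigma^2 / (4 R^2)) (E exp (|Z|^2 / (4 R^2)))^2. *)
definition pair_mgf_const :: real where
  "pair_mgf_const = 64 * exp (1 + 2 * exp 1) * (1 + 2 * exp 1)\<^sup>2"

lemma pair_mgf_const_nonneg: "0 \<le> pair_mgf_const"
  by (simp add: pair_mgf_const_def)

definition ustat_dev_bound :: "real \<Rightarrow> nat \<Rightarrow> real \<Rightarrow> real" where
  "ustat_dev_bound R m L = (8 + pair_mgf_const / 8) * R\<^sup>2 * (sqrt (L / m) + L / m)"

lemma chernoff_parameter:
  fixes L R :: real and m :: nat
  assumes "0 < L" "0 < m" "0 < R"
  obtains l where "0 < l" "l \<le> m / (8 * R\<^sup>2)"
    "pair_mgf_const * R ^ 4 * l\<^sup>2 / m - l * ustat_dev_bound R m L \<le> - L"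
proof -
  define \<kappa> where "\<kappa> = pair_mgf_const"
  define s where "s = sqrt (L / m)"
  define t where "t = min s 1"
  define l where "l = m * t / (8 * R\<^sup>2)"
  have "0 < s" "0 \<le> \<kappa>" and s_sq: "s\<^sup>2 = L / m"
    using assms pair_mgf_const_nonneg by (simp_all add: s_def \<kappa>_def)
  have "0 < t" "t \<le> s" "t \<le> 1"
    using \<open>0 < s\<close> by (simp_all add: t_def)
  have "t\<^sup>2 \<le> t * (s + s\<^sup>2)"
    using \<open>0 < t\<close> \<open>t \<le> s\<close> by (simp add: power2_eq_square mult_left_mono add_increasing2)
  then have "\<kappa> / 64 * t\<^sup>2 \<le> \<kappa> / 64 * (t * (s + s\<^sup>2))"
    using \<open>0 \<le> \<kappa>\<close> by (intro mult_left_mono) simp_all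
  moreover have "s\<^sup>2 \<le> t * (s + s\<^sup>2)"
    using \<open>0 < s\<close> by (cases "s \<le> 1") (simp_all add: t_def power2_eq_square)
  ultimately have key: "\<kappa> / 64 * t\<^sup>2 + s\<^sup>2 \<le> (1 + \<kappa> / 64) * (t * (s + s\<^sup>2))"
    unfolding distrib_right mult_1_left by linarith
  have "ustat_dev_bound R m L = (8 + \<kappa> / 8) * R\<^sup>2 * (s + s\<^sup>2)"
    using s_sq by (simp add: ustat_dev_bound_def \<kappa>_def s_def)
  then have linear: "l * ustat_dev_bound R m L = m * ((1 + \<kappa> / 64) * (t * (s + s\<^sup>2)))"
    using assms by (simp add: l_def field_simps)
  have quadratic: "\<kappa> * R ^ 4 * l\<^sup>2 / m = m * (\<kappa> / 64 * t\<^sup>2)"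
    using assms by (simp add: l_def power2_eq_square power4_eq_xxxx field_simps)
  have "m * (\<kappa> / 64 * t\<^sup>2 + s\<^sup>2) \<le> m * ((1 + \<kappa> / 64) * (t * (s + s\<^sup>2)))"
    using key by (rule mult_left_mono) simp
  moreover have "m * s\<^sup>2 = L"
    using assms(2) by (simp add: s_sq)
  ultimately have "\<kappa> * R ^ 4 * l\<^sup>2 / m - l * ustat_dev_bound R m L \<le> - L"
    unfolding linear quadratic distrib_left by linarith
  moreover have "0 < l" "l \<le> m / (8 * R\<^sup>2)"
    using \<open>0 < t\<close> \<open>t \<le> 1\<close> assms by (simp_all add: l_def divide_right_mono mult_left_le)
  ultimately show ?thesis
    using that unfolding \<kappa>_def by blast
qed

lemma ustat_dev_bound_le:
  fixes L L' :: real and b :: nat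
  assumes "0 < L" "L \<le> L'" "2 \<le> b"
  shows "ustat_dev_bound R (b div 2) L \<le> 4 * (8 + pair_mgf_const / 8) * R\<^sup>2 * (sqrt (L / b) + L' / b)"
proof -
  have "real b \<le> 4 * real (b div 2)" "0 < real (b div 2)"
    using assms(3) by linarith+
  then have quarter: "L / (b div 2) \<le> 4 * (L / b)"
    using assms(1,3) by (simp add: field_simps)
  have "sqrt (L / (b div 2)) \<le> sqrt (4 * (L / b))"
    using quarter by (rule real_sqrt_le_mono)
  also have "\<dots> = 2 * sqrt (L / b)"
    by (subst real_sqrt_mult) simp
  finally have "sqrt (L / (b div 2)) \<le> 2 * sqrt (L / b)" .
  moreover have "L / b \<le> L' / b" "0 \<le> sqrt (L / b)"
    using assms(1,2) by (simp_all add: divide_right_mono)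
  ultimately have "sqrt (L / (b div 2)) + L / (b div 2) \<le> 4 * sqrt (L / b) + 4 * (L' / b)"
    using quarter by (intro add_mono) linarith+
  then have "sqrt (L / (b div 2)) + L / (b div 2) \<le> 4 * (sqrt (L / b) + L' / b)"
    by (simp only: distrib_left)
  then have "(8 + pair_mgf_const / 8) * R\<^sup>2 * (sqrt (L / (b div 2)) + L / (b div 2))
      \<le> (8 + pair_mgf_const / 8) * R\<^sup>2 * (4 * (sqrt (L / b) + L' / b))"
    using pair_mgf_const_nonneg by (intro mult_left_mono) simp_all
  moreover have "(8 + pair_mgf_const / 8) * R\<^sup>2 * (4 * (sqrt (L / b) + L' / b))
      = 4 * (8 + pair_mgf_const / 8) * R\<^sup>2 * (sqrt (L / b) + L' / b)"
    by (simp only: mult_ac)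
  ultimately show ?thesis
    by (simp only: ustat_dev_bound_def)
qed

lemma rel_error_le:
  fixes U s2 :: real and b :: nat
  assumes "0 < s2" "1 \<le> b"
  shows "\<bar>(real b - 1) / b * U / s2 - 1\<bar> \<le> (real b - 1) / b * (\<bar>U - s2\<bar> / s2) + 1 / b"
proof -
  have "(real b - 1) / b * U / s2 - 1 = (real b - 1) / b * ((U - s2) / s2) - 1 / b"
    using assms by (simp add: field_simps)
  also have "\<bar>\<dots>\<bar> \<le> \<bar>(real b - 1) / b * ((U - s2) / s2)\<bar> + \<bar>1 / b\<bar>"
    by (rule abs_triangle_ineq4)
  also have "\<dots> = (real b - 1) / b * (\<bar>U - s2\<bar> / s2) + 1 / b"
    using assms by (simp add: abs_mult)
  finally show ?thesis .
qed

lemma one_div_le_log_term: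
  fixes s2 C R L' :: real and b :: nat
  assumes "0 < s2" "s2 \<le> C * R\<^sup>2" "ln 2 \<le> L'" "0 < b"
  shows "1 / b \<le> C / ln 2 * (R\<^sup>2 / s2) * (L' / b)"
proof -
  have "1 \<le> C * R\<^sup>2 / s2" "1 \<le> L' / ln 2"
    using assms by simp_all
  then have "1 \<le> (C * R\<^sup>2 / s2) * (L' / ln 2)"
    using mult_mono[of 1 "C * R\<^sup>2 / s2" 1 "L' / ln 2"] by simp
  then have "1 / b \<le> (C * R\<^sup>2 / s2) * (L' / ln 2) / b"
    using assms(4) by (intro divide_right_mono) simp_all
  also have "\<dots> = C / ln 2 * (R\<^sup>2 / s2) * (L' / b)"
    by (simp add: field_simps)
  finally show ?thesis .
qed

definition sample_var_const :: real where
  "sample_var_const = 4 * (8 + pair_mgf_const / 8) + 4 * (1 + 2 * exp 1) / ln 2"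

lemma sample_var_const_pos: "0 < sample_var_const"
  using pair_mgf_const_nonneg by (simp add: sample_var_const_def add_pos_nonneg)

section \<open>Concentration of the sample variance\<close>

(* Points of vspace d are extensional, so a coordinate j \<ge> d is constantly undefined. *)
lemma measurable_coord_vspace: "(\<lambda>x. x j) \<in> borel_measurable (vspace d)"
proof (cases "j < d")
  case True
  then show ?thesis
    unfolding vspace_def by (intro measurable_component_singleton) auto
next
  case False
  have "(\<lambda>x. undefined) \<in> borel_measurable (vspace d)"
    by simp
  then show ?thesis
    by (rule measurable_cong[THEN iffD1, rotated])
      (use False in \<open>auto simp: vspace_def space_PiM PiE_def extensional_def\<close>)
qed

locale subgaussian_vector =
  fixes d :: nat and P :: "(nat \<Rightarrow> real) measure" and R :: real
  assumes prob_space_P: "prob_space P"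
    and sets_P: "sets P = sets (vspace d)"
    and integrable_coord: "\<And>j. j < d \<Longrightarrow> integrable P (\<lambda>x. x j)"
    and R_pos: "0 < R"
    and tail: "\<And>t. 0 \<le> t \<Longrightarrow>
      measure P {x \<in> space P. t \<le> vnorm d (centered d P x)} \<le> 2 * exp (- (t\<^sup>2 / (2 * R\<^sup>2)))"
    and integrable_sq_norm: "integrable P (\<lambda>x. (vnorm d (centered d P x))\<^sup>2)"
    and sigma_sq_pos: "0 < sigma_sq d P"
begin

sublocale prob_space P
  by (rule prob_space_P)

lemma measurable_coord [measurable]: "(\<lambda>x. x j) \<in> borel_measurable P"
  using measurable_coord_vspace measurable_cong_sets[OF sets_P refl] by blast

definition sq_dev :: "(nat \<Rightarrow> real) \<Rightarrow> real" where
  "sq_dev x = (\<Sum>j<d. (x j - mean_vec d P j)\<^sup>2)"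

lemma sq_dev_measurable [measurable]: "sq_dev \<in> borel_measurable P"
  unfolding sq_dev_def by measurable

lemma sq_dev_nonneg: "0 \<le> sq_dev x"
  by (simp add: sq_dev_def sum_nonneg)

lemma vnorm_centered: "vnorm d (centered d P x) = sqrt (sq_dev x)"
  by (simp add: vnorm_def centered_def sq_dev_def)

lemma integrable_sq_dev: "integrable P sq_dev"
  using integrable_sq_norm by (simp add: vnorm_centered sq_dev_nonneg)

lemma sigma_sq_eq_integral: "sigma_sq d P = (\<integral>x. sq_dev x \<partial>P)"
  by (simp add: sigma_sq_def vnorm_centered sq_dev_nonneg)

lemma prob_sq_dev_ge:
  fixes k :: nat
  shows "prob {x \<in> space P. 4 * R\<^sup>2 * k \<le> sq_dev x} \<le> 2 * exp (- 2 * k)"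
proof -
  define t where "t = 2 * R * sqrt k"
  have "0 \<le> t" and t_sq: "t\<^sup>2 = 4 * R\<^sup>2 * k"
    using R_pos by (auto simp: t_def power_mult_distrib)
  have "t \<le> vnorm d (centered d P x) \<longleftrightarrow> sqrt (t\<^sup>2) \<le> sqrt (sq_dev x)" for x
    using \<open>0 \<le> t\<close> by (simp add: vnorm_centered)
  then have "4 * R\<^sup>2 * k \<le> sq_dev x \<longleftrightarrow> t \<le> vnorm d (centered d P x)" for x
    unfolding real_sqrt_le_iff t_sq by simp
  moreover have "- (t\<^sup>2 / (2 * R\<^sup>2)) = - 2 * k"
    using R_pos by (simp add: t_sq field_simps)
  ultimately show ?thesis
    using tail[OF \<open>0 \<le> t\<close>] by simp
qed

lemma nn_integral_exp_sq_dev: "(\<integral>\<^sup>+x. exp (sq_dev x / (4 * R\<^sup>2)) \<partial>P) \<le> ennreal (1 + 2 * exp 1)"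
  using R_pos prob_sq_dev_ge sq_dev_nonneg by (intro nn_integral_exp_le_of_tail) auto

lemma integrable_exp_sq_dev: "integrable P (\<lambda>x. exp (sq_dev x / (4 * R\<^sup>2)))"
proof -
  have "(\<integral>\<^sup>+x. exp (sq_dev x / (4 * R\<^sup>2)) \<partial>P) < \<infinity>"
    using nn_integral_exp_sq_dev by (rule order.strict_trans1) simp
  then show ?thesis
    by (intro integrableI_nonneg) auto
qed

definition mgf_sq_dev :: real where
  "mgf_sq_dev = (\<integral>x. exp (sq_dev x / (4 * R\<^sup>2)) \<partial>P)"

lemma mgf_sq_dev_le: "mgf_sq_dev \<le> 1 + 2 * exp 1"
proof -
  have "(\<integral>\<^sup>+x. exp (sq_dev x / (4 * R\<^sup>2)) \<partial>P) = ennreal mgf_sq_dev"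
    unfolding mgf_sq_dev_def using integrable_exp_sq_dev by (intro nn_integral_eq_integral) auto
  then have "ennreal mgf_sq_dev \<le> ennreal (1 + 2 * exp 1)"
    using nn_integral_exp_sq_dev by simp
  then show ?thesis
    by (subst (asm) ennreal_le_iff) auto
qed

lemma sigma_sq_le_mgf: "sigma_sq d P / (4 * R\<^sup>2) \<le> mgf_sq_dev"
proof -
  have "sigma_sq d P / (4 * R\<^sup>2) = (\<integral>x. sq_dev x / (4 * R\<^sup>2) \<partial>P)"
    by (simp add: sigma_sq_eq_integral)
  also have "\<dots> \<le> mgf_sq_dev"
    unfolding mgf_sq_dev_def
  proof (rule integral_mono)
    show "integrable P (\<lambda>x. sq_dev x / (4 * R\<^sup>2))"
      using integrable_sq_dev by simp
    show "sq_dev x / (4 * R\<^sup>2) \<le> exp (sq_dev x / (4 * R\<^sup>2))" for x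
      using exp_ge_add_one_self[of "sq_dev x / (4 * R\<^sup>2)"] by linarith
  qed (rule integrable_exp_sq_dev)
  finally show ?thesis .
qed

lemma sigma_sq_le: "sigma_sq d P \<le> 4 * (1 + 2 * exp 1) * R\<^sup>2"
proof -
  have "sigma_sq d P \<le> mgf_sq_dev * (4 * R\<^sup>2)"
    using sigma_sq_le_mgf R_pos by (simp add: field_simps)
  also have "\<dots> \<le> (1 + 2 * exp 1) * (4 * R\<^sup>2)"
    by (rule mult_right_mono[OF mgf_sq_dev_le]) simp
  finally show ?thesis
    by (simp add: algebra_simps)
qed

lemma half_sq_dist_eq:
  "half_sq_dist d y y' = sq_dev y / 2 + sq_dev y' / 2
     - (\<Sum>j<d. (y j - mean_vec d P j) * (y' j - mean_vec d P j))"
proof -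
  have "(y j - y' j)\<^sup>2 = (y j - mean_vec d P j)\<^sup>2 + (y' j - mean_vec d P j)\<^sup>2
      - 2 * ((y j - mean_vec d P j) * (y' j - mean_vec d P j))" for j
    by (simp add: power2_eq_square algebra_simps)
  then show ?thesis
    by (simp add: half_sq_dist_def sq_dev_def sum.distrib sum_subtractf
        add_divide_distrib diff_divide_distrib flip: sum_distrib_left)
qed

lemma half_sq_dist_nonneg: "0 \<le> half_sq_dist d y y'"
  by (simp add: half_sq_dist_def sum_nonneg)

lemma half_sq_dist_le: "half_sq_dist d y y' \<le> sq_dev y + sq_dev y'"
proof -
  have "(\<Sum>j<d. (y j - y' j)\<^sup>2 / 2) \<le> (\<Sum>j<d. (y j - mean_vec d P j)\<^sup>2 + (y' j - mean_vec d P j)\<^sup>2)"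
  proof (rule sum_mono)
    fix j
    show "(y j - y' j)\<^sup>2 / 2 \<le> (y j - mean_vec d P j)\<^sup>2 + (y' j - mean_vec d P j)\<^sup>2"
      using half_sq_diff_le[of "y j - mean_vec d P j" "y' j - mean_vec d P j"] by simp
  qed
  then show ?thesis
    by (simp add: half_sq_dist_def sq_dev_def sum.distrib sum_divide_distrib)
qed

lemma integrable_cross_term: "integrable P (\<lambda>y. \<Sum>j<d. (y j - mean_vec d P j) * c j)"
  using integrable_coord by (intro Bochner_Integration.integrable_sum integrable_mult_left) auto

lemma integral_cross_term: "(\<integral>y. (\<Sum>j<d. (y j - mean_vec d P j) * c j) \<partial>P) = 0"
proof -
  have "(\<integral>y. (\<Sum>j<d. (y j - mean_vec d P j) * c j) \<partial>P) = (\<Sum>j<d. (\<integral>y. y j - mean_vec d P j \<partial>P) * c j)"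
    using integrable_coord by (subst Bochner_Integration.integral_sum) auto
  also have "\<dots> = 0"
    using integrable_coord by (simp add: mean_vec_def prob_space)
  finally show ?thesis .
qed

lemma integrable_half_sq_dist: "integrable P (\<lambda>y. half_sq_dist d y y')"
  unfolding half_sq_dist_eq using integrable_sq_dev integrable_cross_term by simp

lemma integral_half_sq_dist: "(\<integral>y. half_sq_dist d y y' \<partial>P) = sigma_sq d P / 2 + sq_dev y' / 2"
  unfolding half_sq_dist_eq using integrable_sq_dev integrable_cross_term
  by (simp add: integral_cross_term sigma_sq_eq_integral prob_space)

lemma exp_pair_term_le:
  assumes "\<bar>\<mu>\<bar> \<le> 1 / (8 * R\<^sup>2)"
  shows "exp (\<mu> * (half_sq_dist d y y' - sigma_sq d P))
    \<le> 1 + \<mu> * (half_sq_dist d y y' - sigma_sq d P) + 64 * R ^ 4 * \<mu>\<^sup>2 * exp (sigma_sq d P / (4 * R\<^sup>2))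
        * (exp (sq_dev y / (4 * R\<^sup>2)) * exp (sq_dev y' / (4 * R\<^sup>2)))"
proof -
  define X where "X = half_sq_dist d y y' - sigma_sq d P"
  have "\<bar>X\<bar> \<le> sigma_sq d P + sq_dev y + sq_dev y'"
    using half_sq_dist_nonneg[of y y'] half_sq_dist_le[of y y'] sigma_sq_pos sq_dev_nonneg[of y]
      sq_dev_nonneg[of y'] by (auto simp: X_def abs_le_iff)
  then have "exp (\<bar>X\<bar> / (4 * R\<^sup>2)) \<le> exp ((sigma_sq d P + sq_dev y + sq_dev y') / (4 * R\<^sup>2))"
    using R_pos by (simp add: divide_right_mono)
  also have "\<dots> = exp (sigma_sq d P / (4 * R\<^sup>2)) * (exp (sq_dev y / (4 * R\<^sup>2)) * exp (sq_dev y' / (4 * R\<^sup>2)))"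
    by (simp add: add_divide_distrib exp_add)
  finally have "64 * R ^ 4 * \<mu>\<^sup>2 * exp (\<bar>X\<bar> / (4 * R\<^sup>2))
      \<le> 64 * R ^ 4 * \<mu>\<^sup>2 * (exp (sigma_sq d P / (4 * R\<^sup>2))
        * (exp (sq_dev y / (4 * R\<^sup>2)) * exp (sq_dev y' / (4 * R\<^sup>2))))"
    by (rule mult_left_mono) simp
  moreover have "exp (\<mu> * X) \<le> 1 + \<mu> * X + 4 * \<mu>\<^sup>2 / (1 / (4 * R\<^sup>2))\<^sup>2 * exp (1 / (4 * R\<^sup>2) * \<bar>X\<bar>)"
    using assms R_pos by (intro exp_le_linear_plus_quadratic) auto
  moreover have "4 * \<mu>\<^sup>2 / (1 / (4 * R\<^sup>2))\<^sup>2 = 64 * R ^ 4 * \<mu>\<^sup>2"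
    by (simp add: power_divide power_mult_distrib flip: power_mult)
  ultimately show ?thesis
    unfolding X_def by (simp add: mult.assoc)
qed

lemma one_plus_pair_term_le:
  "1 + 64 * R ^ 4 * \<mu>\<^sup>2 * exp (sigma_sq d P / (4 * R\<^sup>2)) * mgf_sq_dev\<^sup>2
    \<le> exp (pair_mgf_const * R ^ 4 * \<mu>\<^sup>2)"
proof -
  have "0 \<le> mgf_sq_dev"
    by (simp add: mgf_sq_dev_def)
  then have "exp (sigma_sq d P / (4 * R\<^sup>2)) * mgf_sq_dev\<^sup>2 \<le> exp (1 + 2 * exp 1) * (1 + 2 * exp 1)\<^sup>2"
    using order_trans[OF sigma_sq_le_mgf mgf_sq_dev_le] mgf_sq_dev_le by (intro mult_mono power_mono) auto
  then have "64 * R ^ 4 * \<mu>\<^sup>2 * (exp (sigma_sq d P / (4 * R\<^sup>2)) * mgf_sq_dev\<^sup>2)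
      \<le> 64 * R ^ 4 * \<mu>\<^sup>2 * (exp (1 + 2 * exp 1) * (1 + 2 * exp 1)\<^sup>2)"
    by (rule mult_left_mono) simp
  then have bound: "64 * R ^ 4 * \<mu>\<^sup>2 * exp (sigma_sq d P / (4 * R\<^sup>2)) * mgf_sq_dev\<^sup>2
      \<le> pair_mgf_const * R ^ 4 * \<mu>\<^sup>2"
    by (simp add: pair_mgf_const_def ac_simps)
  have "1 + 64 * R ^ 4 * \<mu>\<^sup>2 * exp (sigma_sq d P / (4 * R\<^sup>2)) * mgf_sq_dev\<^sup>2
      \<le> exp (64 * R ^ 4 * \<mu>\<^sup>2 * exp (sigma_sq d P / (4 * R\<^sup>2)) * mgf_sq_dev\<^sup>2)"
    by (rule exp_ge_add_one_self)
  also have "\<dots> \<le> exp (pair_mgf_const * R ^ 4 * \<mu>\<^sup>2)"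
    using bound by simp
  finally show ?thesis .
qed

lemma nn_integral_exp_pair_term_le:
  assumes "\<bar>\<mu>\<bar> \<le> 1 / (8 * R\<^sup>2)"
  shows "(\<integral>\<^sup>+y'. \<integral>\<^sup>+y. exp (\<mu> * (half_sq_dist d y y' - sigma_sq d P)) \<partial>P \<partial>P)
    \<le> exp (pair_mgf_const * R ^ 4 * \<mu>\<^sup>2)"
proof -
  define c where "c = 64 * R ^ 4 * \<mu>\<^sup>2 * exp (sigma_sq d P / (4 * R\<^sup>2))"
  define E where "E y = exp (sq_dev y / (4 * R\<^sup>2))" for y
  define F where "F y y' = 1 + \<mu> * (half_sq_dist d y y' - sigma_sq d P) + c * (E y * E y')" for y y'
  define G where "G y' = 1 + \<mu> * ((sq_dev y' - sigma_sq d P) / 2) + c * mgf_sq_dev * E y'" for y'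
  have exp_le_F: "exp (\<mu> * (half_sq_dist d y y' - sigma_sq d P)) \<le> F y y'" for y y'
    using exp_pair_term_le[OF assms] by (simp add: F_def c_def E_def)
  have F_nonneg: "0 \<le> F y y'" for y y'
    using exp_le_F[of y y'] exp_ge_zero order_trans by blast
  have integrable_E: "integrable P E"
    using integrable_exp_sq_dev by (simp add: E_def[abs_def])
  have integrable_F: "integrable P (\<lambda>y. F y y')" for y'
    using integrable_half_sq_dist integrable_E by (simp add: F_def)
  have integral_F: "(\<integral>y. F y y' \<partial>P) = G y'" for y'
    using integrable_half_sq_dist integrable_E
    by (simp add: F_def G_def integral_half_sq_dist prob_space mgf_sq_dev_def E_def[abs_def] field_simps)
  have G_nonneg: "0 \<le> G y'" for y'
    using integral_nonneg_AE[of "\<lambda>y. F y y'" P] F_nonneg by (simp add: integral_F)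
  have integrable_G: "integrable P G"
    using integrable_sq_dev integrable_E by (simp add: G_def[abs_def])
  have integral_G: "(\<integral>y'. G y' \<partial>P) = 1 + c * mgf_sq_dev\<^sup>2"
    using integrable_sq_dev integrable_E
    by (simp add: G_def prob_space sigma_sq_eq_integral mgf_sq_dev_def E_def[abs_def] power2_eq_square)
  have "(\<integral>\<^sup>+y'. \<integral>\<^sup>+y. exp (\<mu> * (half_sq_dist d y y' - sigma_sq d P)) \<partial>P \<partial>P) \<le> (\<integral>\<^sup>+y'. G y' \<partial>P)"
  proof (rule nn_integral_mono)
    fix y'
    have "(\<integral>\<^sup>+y. exp (\<mu> * (half_sq_dist d y y' - sigma_sq d P)) \<partial>P) \<le> (\<integral>\<^sup>+y. F y y' \<partial>P)"
      by (intro nn_integral_mono ennreal_leI exp_le_F)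
    also have "\<dots> = G y'"
      using integrable_F F_nonneg by (simp add: nn_integral_eq_integral integral_F)
    finally show "(\<integral>\<^sup>+y. exp (\<mu> * (half_sq_dist d y y' - sigma_sq d P)) \<partial>P) \<le> G y'" .
  qed
  also have "\<dots> = ennreal (1 + c * mgf_sq_dev\<^sup>2)"
    using integrable_G G_nonneg by (simp add: nn_integral_eq_integral integral_G)
  also have "\<dots> \<le> exp (pair_mgf_const * R ^ 4 * \<mu>\<^sup>2)"
    using one_plus_pair_term_le[of \<mu>] unfolding c_def by (intro ennreal_leI) (simp add: mult.assoc)
  finally show ?thesis .
qed

abbreviation samples :: "nat \<Rightarrow> (nat \<Rightarrow> nat \<Rightarrow> real) measure" where
  "samples b \<equiv> PiM {..<b} (\<lambda>_. P)"

lemma measurable_sample_coord [measurable]: "(\<lambda>ys. ys i j) \<in> borel_measurable (samples b)"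
proof (cases "i < b")
  case True
  then have "(\<lambda>ys. ys i) \<in> measurable (samples b) P"
    by (intro measurable_component_singleton) auto
  then show ?thesis
    using measurable_coord[of j] by (rule measurable_compose)
next
  case False
  have "(\<lambda>ys. undefined j) \<in> borel_measurable (samples b)"
    by simp
  then show ?thesis
    by (rule measurable_cong[THEN iffD1, rotated]) (use False in \<open>auto simp: space_PiM PiE_def extensional_def\<close>)
qed

lemma pair_stat_measurable [measurable]: "pair_stat d b \<pi> \<in> borel_measurable (samples b)"
  unfolding pair_stat_def half_sq_dist_def by measurable

lemma ustat_measurable [measurable]: "ustat d b \<in> borel_measurable (samples b)"
  unfolding ustat_def half_sq_dist_def by measurable

lemma nn_integral_exp_pair_stat_id:
  assumes "2 \<le> b" "\<bar>l\<bar> \<le> real (b div 2) / (8 * R\<^sup>2)"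
  shows "(\<integral>\<^sup>+ys. exp (l * (pair_stat d b id ys - sigma_sq d P)) \<partial>samples b)
    \<le> exp (pair_mgf_const * R ^ 4 * l\<^sup>2 / (b div 2))"
proof -
  define m where "m = b div 2"
  have "0 < m" "2 * m \<le> b"
    using assms(1) by (auto simp: m_def)
  have "l * (pair_stat d b id ys - sigma_sq d P) = (\<Sum>j<m. l / m * (half_sq_dist d (ys j) (ys (j + m)) - sigma_sq d P))"
    for ys
    unfolding sum_distrib_left[symmetric] sum_subtractf
    using \<open>0 < m\<close> by (simp add: pair_stat_def m_def[symmetric] field_simps)
  then have "(\<integral>\<^sup>+ys. exp (l * (pair_stat d b id ys - sigma_sq d P)) \<partial>samples b)
      = (\<integral>\<^sup>+ys. (\<Prod>j<m. ennreal (exp (l / m * (half_sq_dist d (ys j) (ys (j + m)) - sigma_sq d P)))) \<partial>samples b)"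
    by (simp add: exp_sum prod_ennreal)
  also have "\<dots> = (\<integral>\<^sup>+y'. \<integral>\<^sup>+y. exp (l / m * (half_sq_dist d y y' - sigma_sq d P)) \<partial>P \<partial>P) ^ m"
    using \<open>2 * m \<le> b\<close> by (intro nn_integral_PiM_disjoint_pairs) (unfold half_sq_dist_def, measurable)+
  also have "\<dots> \<le> ennreal (exp (pair_mgf_const * R ^ 4 * (l / m)\<^sup>2)) ^ m"
    using assms(2) \<open>0 < m\<close>
    by (intro power_mono nn_integral_exp_pair_term_le) (auto simp: m_def abs_div field_simps)
  also have "\<dots> = exp (pair_mgf_const * R ^ 4 * l\<^sup>2 / m)"
    using \<open>0 < m\<close> by (simp add: ennreal_power power2_eq_square field_simps flip: exp_of_nat_mult)
  finally show ?thesis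
    unfolding m_def .
qed

lemma nn_integral_exp_pair_stat:
  assumes "2 \<le> b" "\<bar>l\<bar> \<le> real (b div 2) / (8 * R\<^sup>2)" "\<pi> permutes {..<b}"
  shows "(\<integral>\<^sup>+ys. exp (l * (pair_stat d b \<pi> ys - sigma_sq d P)) \<partial>samples b)
    \<le> exp (pair_mgf_const * R ^ 4 * l\<^sup>2 / (b div 2))"
proof -
  have "pair_stat d b \<pi> ys = pair_stat d b id (\<lambda>i\<in>{..<b}. ys (\<pi> i))" for ys
    unfolding pair_stat_def by (intro arg_cong2[where f="(/)"] sum.cong) auto
  then have "(\<integral>\<^sup>+ys. exp (l * (pair_stat d b \<pi> ys - sigma_sq d P)) \<partial>samples b)
      = (\<integral>\<^sup>+ys. exp (l * (pair_stat d b id ys - sigma_sq d P)) \<partial>samples b)"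
    using nn_integral_PiM_permute[OF assms(3), of "\<lambda>ys. ennreal (exp (l * (pair_stat d b id ys - sigma_sq d P)))"]
    by simp
  also have "\<dots> \<le> exp (pair_mgf_const * R ^ 4 * l\<^sup>2 / (b div 2))"
    using assms(1,2) by (rule nn_integral_exp_pair_stat_id)
  finally show ?thesis .
qed

lemma nn_integral_exp_ustat:
  assumes "2 \<le> b" "\<bar>l\<bar> \<le> real (b div 2) / (8 * R\<^sup>2)"
  shows "(\<integral>\<^sup>+ys. exp (l * (ustat d b ys - sigma_sq d P)) \<partial>samples b)
    \<le> exp (pair_mgf_const * R ^ 4 * l\<^sup>2 / (b div 2))"
proof -
  let ?S = "{\<pi>. \<pi> permutes {..<b}}"
  have S: "finite ?S" "?S \<noteq> {}" "card ?S = fact b"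
    using permutes_id[of "{..<b}"] by (auto simp: finite_permutations card_permutations simp del: permutes_id)
  have "exp (l * (ustat d b ys - sigma_sq d P))
      \<le> (\<Sum>\<pi>\<in>?S. exp (l * (pair_stat d b \<pi> ys - sigma_sq d P))) / card ?S" for ys
  proof -
    have "l * (ustat d b ys - sigma_sq d P) = (\<Sum>\<pi>\<in>?S. l * (pair_stat d b \<pi> ys - sigma_sq d P)) / card ?S"
      using S by (simp add: ustat_eq_mean_pair_stat[OF assms(1)] sum_subtractf field_simps
          flip: sum_distrib_left)
    then show ?thesis
      using exp_mean_le_mean_exp[OF S(1,2)] by simp
  qed
  then have "(\<integral>\<^sup>+ys. exp (l * (ustat d b ys - sigma_sq d P)) \<partial>samples b)
      \<le> (\<integral>\<^sup>+ys. ennreal ((\<Sum>\<pi>\<in>?S. exp (l * (pair_stat d b \<pi> ys - sigma_sq d P))) / card ?S) \<partial>samples b)"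
    by (intro nn_integral_mono ennreal_leI)
  also have "\<dots> \<le> exp (pair_mgf_const * R ^ 4 * l\<^sup>2 / (b div 2))"
    using S(1,2) nn_integral_exp_pair_stat[OF assms] by (intro nn_integral_mean_le) auto
  finally show ?thesis .
qed

lemma prob_ustat_one_sided_dev_ge:
  assumes "2 \<le> b" "0 < L" "\<epsilon> \<in> {1, - 1}"
  shows "measure (samples b)
      {ys \<in> space (samples b). ustat_dev_bound R (b div 2) L \<le> \<epsilon> * (ustat d b ys - sigma_sq d P)}
    \<le> exp (- L)"
proof -
  interpret S: prob_space "samples b"
    by (intro prob_space_PiM prob_space_P)
  define T where "T = ustat_dev_bound R (b div 2) L"
  obtain l where l: "0 < l" "l \<le> real (b div 2) / (8 * R\<^sup>2)"
    "pair_mgf_const * R ^ 4 * l\<^sup>2 / (b div 2) - l * T \<le> - L"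
    using chernoff_parameter[of L "b div 2" R] assms R_pos unfolding T_def by auto
  have "\<bar>l * \<epsilon>\<bar> = l" "(l * \<epsilon>)\<^sup>2 = l\<^sup>2"
    using assms(3) \<open>0 < l\<close> by auto
  have "emeasure (samples b) {ys \<in> space (samples b). T \<le> \<epsilon> * (ustat d b ys - sigma_sq d P)}
      \<le> ennreal (exp (- l * T)) * (\<integral>\<^sup>+ys. exp (l * \<epsilon> * (ustat d b ys - sigma_sq d P)) \<partial>samples b)"
    using emeasure_ge_le_exp_nn_integral[OF \<open>0 < l\<close>, of "\<lambda>ys. \<epsilon> * (ustat d b ys - sigma_sq d P)"]
    by (simp add: mult.assoc)
  also have "\<dots> \<le> ennreal (exp (- l * T)) * exp (pair_mgf_const * R ^ 4 * (l * \<epsilon>)\<^sup>2 / (b div 2))"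
    using l \<open>\<bar>l * \<epsilon>\<bar> = l\<close> by (intro mult_left_mono nn_integral_exp_ustat assms(1)) auto
  also have "\<dots> = exp (pair_mgf_const * R ^ 4 * l\<^sup>2 / (b div 2) - l * T)"
    unfolding \<open>(l * \<epsilon>)\<^sup>2 = l\<^sup>2\<close> by (simp flip: ennreal_mult exp_add)
  also have "\<dots> \<le> exp (- L)"
    using l(3) by (intro ennreal_leI) simp
  finally show ?thesis
    unfolding T_def by (simp add: S.emeasure_eq_measure)
qed

lemma prob_ustat_dev_ge:
  assumes "2 \<le> b" "0 < L"
  shows "measure (samples b)
      {ys \<in> space (samples b). ustat_dev_bound R (b div 2) L \<le> \<bar>ustat d b ys - sigma_sq d P\<bar>}
    \<le> 2 * exp (- L)"
proof -
  define T where "T = ustat_dev_bound R (b div 2) L"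
  have "{ys \<in> space (samples b). T \<le> \<bar>ustat d b ys - sigma_sq d P\<bar>}
      = {ys \<in> space (samples b). T \<le> 1 * (ustat d b ys - sigma_sq d P)}
        \<union> {ys \<in> space (samples b). T \<le> - 1 * (ustat d b ys - sigma_sq d P)}"
    by (auto simp: abs_if)
  then have "measure (samples b) {ys \<in> space (samples b). T \<le> \<bar>ustat d b ys - sigma_sq d P\<bar>}
      \<le> measure (samples b) {ys \<in> space (samples b). T \<le> 1 * (ustat d b ys - sigma_sq d P)}
        + measure (samples b) {ys \<in> space (samples b). T \<le> - 1 * (ustat d b ys - sigma_sq d P)}"
    by (simp only:) (rule measure_Un_le; measurable)
  also have "\<dots> \<le> 2 * exp (- L)"
    using prob_ustat_one_sided_dev_ge[OF assms, of 1] prob_ustat_one_sided_dev_ge[OF assms, of "- 1"]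
    unfolding T_def by simp
  finally show ?thesis
    unfolding T_def .
qed

lemma ustat_rel_dev_le:
  assumes "1 \<le> b" "0 < L" "L \<le> L'"
    and dev: "2 \<le> b \<Longrightarrow> \<bar>ustat d b ys - sigma_sq d P\<bar> < ustat_dev_bound R (b div 2) L"
  shows "(real b - 1) / b * (\<bar>ustat d b ys - sigma_sq d P\<bar> / sigma_sq d P)
    \<le> 4 * (8 + pair_mgf_const / 8) * (R\<^sup>2 / sigma_sq d P) * (sqrt (L / b) + L' / b)"
proof (cases "2 \<le> b")
  case True
  have "\<bar>ustat d b ys - sigma_sq d P\<bar> \<le> 4 * (8 + pair_mgf_const / 8) * R\<^sup>2 * (sqrt (L / b) + L' / b)"
    using dev[OF True] ustat_dev_bound_le[where R = R, OF assms(2,3) True] by linarith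
  then have "\<bar>ustat d b ys - sigma_sq d P\<bar> / sigma_sq d P
      \<le> 4 * (8 + pair_mgf_const / 8) * (R\<^sup>2 / sigma_sq d P) * (sqrt (L / b) + L' / b)"
    using sigma_sq_pos by (simp add: divide_right_mono)
  then show ?thesis
    using assms(1) sigma_sq_pos by (intro order_trans[OF mult_left_le_one_le]) simp_all
next
  case False
  then have "b = 1"
    using assms(1) by simp
  then show ?thesis
    using assms(2,3) sigma_sq_pos pair_mgf_const_nonneg by simp
qed

lemma sample_var_rel_error_le:
  assumes "1 \<le> b" "0 < \<delta>" "\<delta> < 1"
    and dev: "2 \<le> b \<Longrightarrow> \<bar>ustat d b ys - sigma_sq d P\<bar> < ustat_dev_bound R (b div 2) (ln (2 * real b / \<delta>))"
  shows "\<bar>sample_var d b ys / sigma_sq d P - 1\<bar>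
    \<le> sample_var_const * inverse ((sqrt (sigma_sq d P) / R)\<^sup>2)
      * (sqrt (ln (2 * real b / \<delta>) / real b) + ln (2 * real (max b d) / \<delta>) / real b)"
proof -
  define L where "L = ln (2 * real b / \<delta>)"
  define L' where "L' = ln (2 * real (max b d) / \<delta>)"
  define S where "S = sqrt (L / b) + L' / b"
  define q where "q = R\<^sup>2 / sigma_sq d P"
  have "0 < L" "L \<le> L'" "ln 2 \<le> L'"
    using assms(1-3) by (simp_all add: L_def L'_def field_simps)
  have "0 < q"
    using sigma_sq_pos R_pos by (simp add: q_def)
  have "1 / b \<le> 4 * (1 + 2 * exp 1) / ln 2 * q * (L' / b)"
    using one_div_le_log_term[OF sigma_sq_pos sigma_sq_le \<open>ln 2 \<le> L'\<close>] assms(1) by (simp add: q_def)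
  also have "\<dots> \<le> 4 * (1 + 2 * exp 1) / ln 2 * q * S"
    using \<open>0 < q\<close> \<open>0 < L\<close> by (intro mult_left_mono) (simp_all add: S_def)
  finally have bias_term: "1 / b \<le> 4 * (1 + 2 * exp 1) / ln 2 * q * S" .
  have "\<bar>sample_var d b ys / sigma_sq d P - 1\<bar>
      \<le> (real b - 1) / b * (\<bar>ustat d b ys - sigma_sq d P\<bar> / sigma_sq d P) + 1 / b"
    unfolding sample_var_eq_ustat using rel_error_le[OF sigma_sq_pos assms(1)] by simp
  also have "\<dots> \<le> sample_var_const * q * S"
    unfolding sample_var_const_def distrib_right
    using add_mono[OF ustat_rel_dev_le[OF assms(1) \<open>0 < L\<close> \<open>L \<le> L'\<close> dev[folded L_def], folded q_def S_def]
        bias_term] .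
  also have "q = inverse ((sqrt (sigma_sq d P) / R)\<^sup>2)"
    using sigma_sq_pos by (simp add: q_def power_divide)
  finally show ?thesis
    by (simp add: S_def L_def L'_def)
qed

lemma sample_var_concentration:
  assumes "1 \<le> b" "0 < \<delta>" "\<delta> < 1"
  shows "1 - \<delta> \<le> measure (samples b)
    {ys \<in> space (samples b). \<bar>sample_var d b ys / sigma_sq d P - 1\<bar>
      \<le> sample_var_const * inverse ((sqrt (sigma_sq d P) / R)\<^sup>2)
        * (sqrt (ln (2 * real b / \<delta>) / real b) + ln (2 * real (max b d) / \<delta>) / real b)}"
    (is "_ \<le> measure _ ?good")
proof -
  interpret S: prob_space "samples b"
    by (intro prob_space_PiM prob_space_P)
  define bad where "bad = {ys \<in> space (samples b).
    2 \<le> b \<and> ustat_dev_bound R (b div 2) (ln (2 * real b / \<delta>)) \<le> \<bar>ustat d b ys - sigma_sq d P\<bar>}"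
  have "space (samples b) - bad \<subseteq> ?good"
  proof
    fix ys
    assume "ys \<in> space (samples b) - bad"
    then have "ys \<in> space (samples b)"
      and "2 \<le> b \<Longrightarrow> \<bar>ustat d b ys - sigma_sq d P\<bar> < ustat_dev_bound R (b div 2) (ln (2 * real b / \<delta>))"
      by (auto simp: bad_def not_le)
    then show "ys \<in> ?good"
      using sample_var_rel_error_le[OF assms] by blast
  qed
  moreover have "?good \<in> sets (samples b)"
    unfolding sample_var_def sample_mean_def vnorm_def by measurable
  ultimately have "S.prob (space (samples b) - bad) \<le> S.prob ?good"
    by (rule S.finite_measure_mono)
  moreover have "S.prob bad \<le> \<delta>"
  proof (cases "2 \<le> b")
    case True
    have "0 < 2 * real b / \<delta>"
      using assms by simp
    then have "S.prob bad \<le> 2 * exp (- ln (2 * real b / \<delta>))"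
      using prob_ustat_dev_ge[OF True, of "ln (2 * real b / \<delta>)"] assms True by (simp add: bad_def)
    also have "\<dots> = \<delta> / b"
      using \<open>0 < 2 * real b / \<delta>\<close> by (simp add: exp_minus)
    also have "\<dots> \<le> \<delta> / 1"
      using assms by (intro divide_left_mono) simp_all
    finally show ?thesis
      by simp
  qed (use assms in \<open>simp add: bad_def\<close>)
  moreover have "S.prob (space (samples b) - bad) = 1 - S.prob bad"
    by (rule S.prob_compl) (simp add: bad_def)
  ultimately show ?thesis
    by linarith
qed

end

theorem lemma9:
  shows "\<exists>c::real. c > 0 \<and>
    (\<forall>(d::nat) (b::nat) (P::(nat \<Rightarrow> real) measure) (R::real) (\<delta>::real).
      prob_space P \<and> sets P = sets (vspace d) \<and>
      (\<forall>j<d. integrable P (\<lambda>x. x j)) \<and>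
      R > 0 \<and>
      (\<forall>t\<ge>0. measure P {x \<in> space P. vnorm d (centered d P x) \<ge> t}
                 \<le> 2 * exp (- (t\<^sup>2 / (2 * R\<^sup>2)))) \<and>
      integrable P (\<lambda>x. (vnorm d (centered d P x))\<^sup>2) \<and>
      sigma_sq d P > 0 \<and>
      b \<ge> 1 \<and> 0 < \<delta> \<and> \<delta> < 1
      \<longrightarrow>
      (let \<sigma> = sqrt (sigma_sq d P); K_snr = \<sigma> / R in
       measure (PiM {..<b} (\<lambda>_. P))
         {ys \<in> space (PiM {..<b} (\<lambda>_. P)).
            \<bar>sample_var d b ys / sigma_sq d P - 1\<bar>
              \<le> c * inverse (K_snr\<^sup>2) *
                 (sqrt (ln (2 * real b / \<delta>) / real b)
                  + ln (2 * real (max b d) / \<delta>) / real b)}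
       \<ge> 1 - \<delta>))"
proof (intro exI[of _ sample_var_const] conjI sample_var_const_pos allI impI, goal_cases)
  case (1 d b P R \<delta>)
  then interpret subgaussian_vector d P R
    by (intro subgaussian_vector.intro) blast+
  from 1 show ?case
    using sample_var_concentration[of b \<delta>] by (simp add: Let_def)
qed

end
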